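(* Let $m\ge1$, $L\in\{L',\mathcal{R}^*\}$ and $C(m)=\{(Tr(ax))_{x\in L}:a\in\mathcal{R}\}\subseteq R^{|L|}$. Then the dual Lee distance of $C(m)$, i.e. the minimum Lee weight of a nonzero codeword of $C(m)^\perp=\{y\in R^{|L|}:\sum_{x\in L}c_xy_x=0\ \forall c\in C(m)\}$, equals $2$.
   Context: Let $R=\mathbb{F}_3[u]/(u^3-1)$ and $\mathcal{R}=\mathbb{F}_{3^m}[u]/(u^3-1)=\mathbb{F}_{3^m}+u\mathbb{F}_{3^m}+u^2\mathbb{F}_{3^m}$. Every element of $\mathcal{R}$ is uniquely $x_1+x_2(u-1)+x_3(u-1)^2$ with $x_i\in\mathbb{F}_{3^m}$; $\mathcal{R}^*$ (the units) consists of those with $x_1\neq0$. $Tr:\mathcal{R}\to R$ is $Tr(a+ub+u^2c)=tr(a)+u\,tr(b)+u^2tr(c)$, with $tr$ the absolute trace $\mathbb{F}_{3^m}\to\mathbb{F}_3$. $\mathcal{Q}$ denotes the nonzero squares of $\mathbb{F}_{3^m}$ and $L'=\{x_1+x_2(u-1)+x_3(u-1)^2:x_1\in\mathcal{Q},x_2,x_3\in\mathbb{F}_{3^m}\}$. Coordinates of $R^{|L|}$ are indexed by $L$. The Gray map $\phi:R\to\mathbb{F}_3^3$ is $\phi(a'+ub'+u^2c')=(a',b',c')$, extended coordinatewise; the Lee weight of $v\in R^n$ is the Hamming weight of $\phi(v)$. *)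

theory Defs
  imports Main
begin

text \<open>Elements of \<open>K[u]/(u^3-1)\<close> are represented by coefficient triples
  \<open>(a,b,c)\<close> standing for \<open>a + u b + u^2 c\<close>.  Here \<open>K\<close> is a finite field
  \<open>'a\<close> of order \<open>3^m\<close> (playing the role of \<open>F_{3^m}\<close>); the ring
  \<open>R = F_3[u]/(u^3-1)\<close> is the subring of triples with all coefficients in the
  prime field \<open>F_3 = {0,1,2}\<close> of \<open>'a\<close>.\<close>

type_synonym 'a cyc3 = "'a \<times> 'a \<times> 'a"

definition cadd :: "'a::field cyc3 \<Rightarrow> 'a cyc3 \<Rightarrow> 'a cyc3" where
  "cadd x y = (case x of (a,b,c) \<Rightarrow> case y of (a',b',c') \<Rightarrow> (a+a', b+b', c+c'))"

text \<open>Multiplication modulo \<open>u^3 - 1\<close>.\<close>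
definition cmul :: "'a::field cyc3 \<Rightarrow> 'a cyc3 \<Rightarrow> 'a cyc3" where
  "cmul x y = (case x of (a,b,c) \<Rightarrow> case y of (a',b',c') \<Rightarrow>
     (a*a' + b*c' + c*b', a*b' + b*a' + c*c', a*c' + b*b' + c*a'))"

definition czero :: "'a::field cyc3" where "czero = (0,0,0)"
definition cone :: "'a::field cyc3" where "cone = (1,0,0)"

definition csum :: "('b \<Rightarrow> 'a::field cyc3) \<Rightarrow> 'b set \<Rightarrow> 'a cyc3" where
  "csum f A = (sum (\<lambda>x. fst (f x)) A, sum (\<lambda>x. fst (snd (f x))) A, sum (\<lambda>x. snd (snd (f x))) A)"

definition F3 :: "'a::field set" where "F3 = {0, 1, 2}"
definition Rset :: "'a::field cyc3 set" where "Rset = F3 \<times> F3 \<times> F3"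

definition abstr :: "nat \<Rightarrow> 'a::field \<Rightarrow> 'a" where
  "abstr m x = (\<Sum>i<m. x ^ (3 ^ i))"

definition Tr :: "nat \<Rightarrow> 'a::field cyc3 \<Rightarrow> 'a cyc3" where
  "Tr m x = (case x of (a,b,c) \<Rightarrow> (abstr m a, abstr m b, abstr m c))"

text \<open>\<open>x1 + x2(u-1) + x3(u-1)^2\<close>, using \<open>(u-1)^2 = u^2 - 2u + 1\<close>.\<close>
definition ubasis :: "'a::field \<Rightarrow> 'a \<Rightarrow> 'a \<Rightarrow> 'a cyc3" where
  "ubasis x1 x2 x3 = (x1 - x2 + x3, x2 - 2*x3, x3)"

definition Qsq :: "'a::field set" where "Qsq = {x^2 | x. x \<noteq> 0}"

definition Lprime :: "'a::field cyc3 set" where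
  "Lprime = {ubasis x1 x2 x3 | x1 x2 x3. x1 \<in> Qsq}"

definition Runits :: "'a::field cyc3 set" where
  "Runits = {x. \<exists>y. cmul x y = cone}"

text \<open>The trace code \<open>C(m) = {(Tr(a x))_{x\<in>L} : a \<in> \<R>}\<close>, vectors indexed by \<open>L\<close>
  (represented as functions that vanish outside \<open>L\<close>).\<close>
definition tcode :: "nat \<Rightarrow> 'a::field cyc3 set \<Rightarrow> ('a cyc3 \<Rightarrow> 'a cyc3) set" where
  "tcode m L = {(\<lambda>x. if x \<in> L then Tr m (cmul a x) else czero) | a. True}"

definition dual_code :: "'a::field cyc3 set \<Rightarrow> ('a cyc3 \<Rightarrow> 'a cyc3) set \<Rightarrow> ('a cyc3 \<Rightarrow> 'a cyc3) set" where
  "dual_code L C = {y. (\<forall>x\<in>L. y x \<in> Rset) \<and> (\<forall>x. x \<notin> L \<longrightarrow> y x = czero) \<and>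
      (\<forall>c\<in>C. csum (\<lambda>x. cmul (c x) (y x)) L = czero)}"

text \<open>Hamming weight of the Gray image \<open>(a',b',c')\<close>.\<close>
definition gray_wt :: "'a::field cyc3 \<Rightarrow> nat" where
  "gray_wt x = (case x of (a,b,c) \<Rightarrow> card {i::nat. i < 3 \<and> [a,b,c] ! i \<noteq> 0})"

definition lee_wt :: "'a::field cyc3 set \<Rightarrow> ('a cyc3 \<Rightarrow> 'a cyc3) \<Rightarrow> nat" where
  "lee_wt L y = (\<Sum>x\<in>L. gray_wt (y x))"

definition min_lee_dist :: "'a::field cyc3 set \<Rightarrow> ('a cyc3 \<Rightarrow> 'a cyc3) set \<Rightarrow> nat" where
  "min_lee_dist L D = Min {lee_wt L y | y. y \<in> D \<and> (\<exists>x\<in>L. y x \<noteq> czero)}"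

end

theory Submission
  imports Defs "HOL-Number_Theory.Residues" "HOL-Computational_Algebra.Polynomial"
begin

text \<open>A nonzero dual codeword \<open>y\<close> with a single nonzero coordinate \<open>y x\<^sub>0\<close>, \<open>x\<^sub>0\<close> a unit,
  is impossible: for \<open>a = t x\<^sub>0\<^sup>-\<^sup>1\<close> with \<open>tr t \<noteq> 0\<close> the check equation reads \<open>tr t \<cdot> y x\<^sub>0 = 0\<close>.
  Since \<open>L'\<close> consists of units, every nonzero dual codeword has Lee weight at least 2.
  Conversely \<open>1\<close> and \<open>u\<close> lie in \<open>L\<close>, and the word equal to \<open>1\<close> at \<open>1\<close>, to \<open>2u\<^sup>2\<close> at \<open>u\<close> and
  zero elsewhere is dual of Lee weight 2, because \<open>Tr(au) = u Tr(a)\<close> and \<open>1 + 2u\<^sup>3 = 3 = 0\<close>.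
  The trace is not identically zero since it is a polynomial of degree \<open>3\<^sup>m\<^sup>-\<^sup>1\<close>.\<close>

lemma CHAR_eq_if_card_eq_prime_power:
  fixes p :: nat
  assumes "prime p" and "card (UNIV :: 'a::{field,finite} set) = p ^ m"
  shows "CHAR('a) = p"
proof -
  have "prime CHAR('a)" by (rule prime_CHAR_semidom) (simp add: finite_imp_CHAR_pos)
  moreover have "CHAR('a) dvd p ^ m" using CHAR_dvd_CARD[where 'a='a] assms(2) by simp
  ultimately have "CHAR('a) dvd p" using prime_dvd_power by blast
  with \<open>prime CHAR('a)\<close> assms(1) show ?thesis by (simp add: primes_dvd_imp_eq)
qed

lemma three_eq_zero_if_card:
  assumes "card (UNIV :: 'a::{field,finite} set) = 3 ^ m"
  shows "(3::'a) = 0"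
  using of_nat_CHAR[where 'a='a] CHAR_eq_if_card_eq_prime_power[OF _ assms] by simp

lemma cmul_commute: "cmul x y = cmul y x"
  by (cases x; cases y) (simp add: cmul_def algebra_simps)

lemma cmul_assoc: "cmul (cmul x y) z = cmul x (cmul y z)"
  by (cases x; cases y; cases z) (simp add: cmul_def algebra_simps)

lemma cmul_cone_left [simp]: "cmul cone x = x"
  by (cases x) (simp add: cmul_def cone_def)

lemma cmul_cone_right [simp]: "cmul x cone = x"
  by (cases x) (simp add: cmul_def cone_def)

lemma cmul_czero_right [simp]: "cmul x czero = czero"
  by (cases x) (simp add: cmul_def czero_def)

lemma cmul_scalar_left: "cmul (s,0,0) (a,b,c) = (s*a, s*b, s*c)"
  by (simp add: cmul_def)

lemma ubasis_mult:
  fixes a b c a' b' c' :: "'a::field"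
  assumes "(3::'a) = 0"
  shows "cmul (ubasis a b c) (ubasis a' b' c') =
    ubasis (a*a') (a*b' + b*a') (a*c' + b*b' + c*a')"
proof -
  have "(6::'a) = 2 * 3" by simp
  with assms show ?thesis
    unfolding cmul_def ubasis_def by (simp add: algebra_simps)
qed

lemma ubasis_in_Runits:
  fixes s x2 x3 :: "'a::field"
  assumes "(3::'a) = 0" and "s \<noteq> 0"
  shows "ubasis s x2 x3 \<in> Runits"
proof -
  have "cmul (ubasis s x2 x3) (ubasis (1/s) (-x2/s^2) (x2^2/s^3 - x3/s^2)) = cone"
    unfolding ubasis_mult[OF assms(1)] using assms(2)
    by (simp add: ubasis_def cone_def field_simps power2_eq_square power3_eq_cube)
  then show ?thesis unfolding Runits_def by blast
qed

lemma Lprime_subset_Runits: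
  assumes "(3::'a::field) = 0"
  shows "Lprime \<subseteq> (Runits :: 'a cyc3 set)"
  using ubasis_in_Runits[OF assms] by (auto simp: Lprime_def Qsq_def)

lemma one_and_u_in_Lprime: "cone \<in> (Lprime :: 'a::field cyc3 set)" "(0,1,0) \<in> (Lprime :: 'a cyc3 set)"
proof -
  have "(1::'a) \<in> Qsq" unfolding Qsq_def by (rule CollectI, rule exI[of _ 1]) simp
  moreover have "cone = ubasis 1 0 (0::'a)" "(0,1,0) = ubasis 1 1 (0::'a)"
    by (simp_all add: cone_def ubasis_def)
  ultimately show "cone \<in> (Lprime :: 'a cyc3 set)" "(0,1,0) \<in> (Lprime :: 'a cyc3 set)"
    unfolding Lprime_def by blast+
qed

lemma one_and_u_in_Runits: "cone \<in> (Runits :: 'a::field cyc3 set)" "(0,1,0) \<in> (Runits :: 'a cyc3 set)"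
proof -
  have "cmul (0,1,0) (0,0,1) = (cone :: 'a cyc3)" by (simp add: cmul_def cone_def)
  then show "(0,1,0) \<in> (Runits :: 'a cyc3 set)" unfolding Runits_def by blast
  show "cone \<in> (Runits :: 'a cyc3 set)" unfolding Runits_def using cmul_cone_left by blast
qed

lemma abstr_zero [simp]: "abstr m (0::'a::field) = 0"
  by (simp add: abstr_def power_0_left)

lemma abstr_not_identically_zero:
  assumes "card (UNIV :: 'a::{field,finite} set) = 3 ^ m" and "m \<ge> 1"
  shows "\<exists>t::'a. abstr m t \<noteq> 0"
proof (rule ccontr)
  assume "\<nexists>t::'a. abstr m t \<noteq> 0"
  define p :: "'a poly" where "p = (\<Sum>i<m. monom 1 (3^i))"
  have roots: "{x. poly p x = 0} = UNIV"
    using \<open>\<nexists>t. abstr m t \<noteq> 0\<close> by (auto simp: p_def abstr_def poly_sum poly_monom)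
  have coeff_p: "coeff p n = (\<Sum>i<m. if 3^i = n then 1 else 0)" for n
    by (simp add: p_def coeff_sum coeff_monom)
  have "coeff p (3^(m-1)) = (\<Sum>i\<in>{m-1}. 1)"
    unfolding coeff_p using assms(2)
    by (intro sum.mono_neutral_cong_right) (auto simp: power_inject_exp)
  then have "p \<noteq> 0" by auto
  have "degree p \<le> 3^(m-1)"
  proof (rule degree_le, intro allI impI)
    fix n :: nat assume "3^(m-1) < n"
    moreover have "3^i \<le> (3::nat)^(m-1)" if "i < m" for i
      using that by (intro power_increasing) auto
    ultimately show "coeff p n = 0"
      unfolding coeff_p by (intro sum.neutral) (auto simp del: power_increasing_iff dest: leD)
  qed
  moreover have "card {x. poly p x = 0} \<le> degree p" by (rule card_poly_roots_bound[OF \<open>p \<noteq> 0\<close>])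
  moreover have "card {x. poly p x = 0} = 3^m" using roots assms(1) by simp
  ultimately have "(3::nat)^m \<le> 3^(m-1)" by linarith
  moreover have "(3::nat)^(m-1) < 3^m" using assms(2) by (intro power_strict_increasing) auto
  ultimately show False by linarith
qed

lemma gray_wt_eq:
  "gray_wt ((a,b,c) :: 'a::field cyc3) = of_bool (a \<noteq> 0) + of_bool (b \<noteq> 0) + of_bool (c \<noteq> 0)"
proof -
  have "{i::nat. i < 3 \<and> [a,b,c] ! i \<noteq> 0} = {..<3} \<inter> {i. [a,b,c] ! i \<noteq> 0}" by auto
  then have "gray_wt (a,b,c) = (\<Sum>i<3. of_bool ([a,b,c] ! i \<noteq> 0))"
    by (simp add: gray_wt_def)
  then show ?thesis by (simp add: eval_nat_numeral)
qed

lemma gray_wt_pos: "v \<noteq> (czero :: 'a::field cyc3) \<Longrightarrow> gray_wt v \<ge> 1"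
  by (cases v) (auto simp: gray_wt_eq czero_def)

lemma lee_wt_ge_2_if_two_nonzero:
  assumes "finite L" "x \<in> L" "x' \<in> L" "x \<noteq> x'" "y x \<noteq> czero" "y x' \<noteq> czero"
  shows "lee_wt L y \<ge> 2"
proof -
  have "2 \<le> (\<Sum>z\<in>{x,x'}. gray_wt (y z))"
    using assms(4-6) gray_wt_pos[of "y x"] gray_wt_pos[of "y x'"] by simp
  also have "\<dots> \<le> lee_wt L y"
    unfolding lee_wt_def using assms(1-3) by (intro sum_mono2) auto
  finally show ?thesis .
qed

lemma csum_mono_neutral_right:
  assumes "finite L" "S \<subseteq> L" "\<forall>z\<in>L - S. f z = czero"
  shows "csum f L = csum f S"
  using assms unfolding csum_def czero_def
  by (intro prod_eqI; simp; intro sum.mono_neutral_right) auto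

lemma dual_code_not_single_unit_support:
  fixes L :: "'a::field cyc3 set" and t :: 'a
  assumes "finite L" "abstr m t \<noteq> 0"
    and "y \<in> dual_code L (tcode m L)" "x \<in> L" "x \<in> Runits"
    and "\<forall>z\<in>L. z \<noteq> x \<longrightarrow> y z = czero"
  shows "y x = czero"
proof -
  obtain w where w: "cmul x w = cone" using assms(5) unfolding Runits_def by auto
  define a where "a = cmul (t,0,0) w"
  have "cmul a x = (t,0,0)"
    unfolding a_def using w by (simp add: cmul_assoc cmul_commute[of w])
  define c where "c = (\<lambda>z. if z \<in> L then Tr m (cmul a z) else czero)"
  have "c \<in> tcode m L" unfolding c_def tcode_def by blast
  then have "csum (\<lambda>z. cmul (c z) (y z)) L = czero"
    using assms(3) unfolding dual_code_def by blast
  moreover have "csum (\<lambda>z. cmul (c z) (y z)) L = csum (\<lambda>z. cmul (c z) (y z)) {x}"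
    by (intro csum_mono_neutral_right) (use assms(1,4,6) in auto)
  moreover have "c x = (abstr m t, 0, 0)"
    unfolding c_def using assms(4) \<open>cmul a x = (t,0,0)\<close> by (simp add: Tr_def)
  ultimately show ?thesis using assms(2) by (cases "y x") (simp add: csum_def cmul_scalar_left czero_def)
qed

lemma lee_wt_dual_code_ge_2:
  fixes L :: "'a::field cyc3 set" and t :: 'a
  assumes "finite L" "L \<subseteq> Runits" "abstr m t \<noteq> 0"
    and "y \<in> dual_code L (tcode m L)" "x \<in> L" "y x \<noteq> czero"
  shows "lee_wt L y \<ge> 2"
proof (cases "\<exists>x'\<in>L. x' \<noteq> x \<and> y x' \<noteq> czero")
  case True
  then show ?thesis using assms(1,5,6) lee_wt_ge_2_if_two_nonzero by metis
next
  case False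
  then show ?thesis using dual_code_not_single_unit_support[OF assms(1,3,4,5)] assms(2,5,6) by blast
qed

definition dual_weight_two :: "'a::field cyc3 \<Rightarrow> 'a cyc3" where
  "dual_weight_two x = (if x = cone then cone else if x = (0,1,0) then (0,0,2) else czero)"

lemma dual_weight_two_in_dual_code:
  assumes "(3::'a::field) = 0" "finite L" "cone \<in> L" "(0,1,0) \<in> (L :: 'a cyc3 set)"
  shows "dual_weight_two \<in> dual_code L (tcode m L)"
  unfolding dual_code_def
proof (intro CollectI conjI ballI allI impI)
  fix x :: "'a cyc3"
  show "dual_weight_two x \<in> Rset"
    by (simp add: dual_weight_two_def Rset_def F3_def cone_def czero_def)
  show "x \<notin> L \<Longrightarrow> dual_weight_two x = czero"
    using assms(3,4) by (auto simp: dual_weight_two_def)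
next
  fix c assume "c \<in> tcode m L"
  then obtain a where c: "c = (\<lambda>x. if x \<in> L then Tr m (cmul a x) else czero)"
    unfolding tcode_def by blast
  obtain a1 a2 a3 where a: "a = (a1,a2,a3)" by (cases a)
  have neq: "cone \<noteq> ((0,1,0) :: 'a cyc3)" by (simp add: cone_def)
  have "csum (\<lambda>x. cmul (c x) (dual_weight_two x)) L =
      csum (\<lambda>x. cmul (c x) (dual_weight_two x)) {cone, (0,1,0)}"
    by (intro csum_mono_neutral_right) (use assms(2-4) in \<open>auto simp: dual_weight_two_def\<close>)
  also have "\<dots> = (3 * abstr m a1, 3 * abstr m a2, 3 * abstr m a3)"
    using assms(3,4) neq by (simp add: csum_def c dual_weight_two_def a cmul_def Tr_def cone_def)
  also have "\<dots> = czero" using assms(1) by (simp add: czero_def)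
  finally show "csum (\<lambda>x. cmul (c x) (dual_weight_two x)) L = czero" .
qed

lemma lee_wt_dual_weight_two:
  assumes "(3::'a::field) = 0" "finite L" "cone \<in> L" "(0,1,0) \<in> (L :: 'a cyc3 set)"
  shows "lee_wt L dual_weight_two = 2"
proof -
  have "(3::'a) = 2 + 1" by simp
  then have "(2::'a) \<noteq> 0" using assms(1) by (metis add_0 zero_neq_one)
  have "lee_wt L dual_weight_two = (\<Sum>x\<in>{cone, (0,1,0) :: 'a cyc3}. gray_wt (dual_weight_two x))"
    unfolding lee_wt_def
    by (intro sum.mono_neutral_right) (use assms(2-4) in \<open>auto simp: dual_weight_two_def gray_wt_eq czero_def\<close>)
  also have "\<dots> = 2"
    using \<open>(2::'a) \<noteq> 0\<close> by (simp add: dual_weight_two_def cone_def gray_wt_eq)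
  finally show ?thesis .
qed

theorem theorem7p2:
  fixes m :: nat and L :: "'a::{field,finite} cyc3 set"
  assumes "m \<ge> 1" and "card (UNIV :: 'a set) = 3 ^ m"
    and "L \<in> {Lprime, Runits}"
  shows "min_lee_dist L (dual_code L (tcode m L)) = 2"
proof -
  have three: "(3::'a) = 0" using three_eq_zero_if_card[OF assms(2)] .
  have units: "L \<subseteq> Runits" and one_u: "cone \<in> L" "(0,1,0) \<in> L"
    using assms(3) Lprime_subset_Runits[OF three] one_and_u_in_Lprime one_and_u_in_Runits by auto
  obtain t :: 'a where t: "abstr m t \<noteq> 0" using abstr_not_identically_zero[OF assms(2,1)] by blast
  have "dual_weight_two cone \<noteq> czero" by (simp add: dual_weight_two_def cone_def czero_def)
  then have "2 \<in> {lee_wt L y | y. y \<in> dual_code L (tcode m L) \<and> (\<exists>x\<in>L. y x \<noteq> czero)}"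
    using dual_weight_two_in_dual_code[OF three _ one_u] lee_wt_dual_weight_two[OF three _ one_u]
      one_u by force
  then show ?thesis
    unfolding min_lee_dist_def
    using lee_wt_dual_code_ge_2[OF _ units t] by (intro Min_eqI) auto
qed

end
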